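(* Let $(\mathcal G,\mathcal B,\mathcal H)$ be either $(G,\beta,H)$ or $(G^L,\beta^L,H^L)$ with $L\ge2$. There is a constant $C$ depending only on the shape-regularity of the mesh family such that for every simplex $K\in\mathcal T_h$ and every $\phi\in S^1_{h,PD}$, $$\int_K\|\pi_h[\mathcal B(\phi)]-\mathcal B(\phi)\|^2+\max_{m,p=1,\dots,d}\int_K\|\Lambda_{m,p}(\phi)-\mathcal B(\phi)\,\delta_{mp}\|^2\le C\,h^2\int_K\|\nabla\phi\|^2 ,$$ where $\delta_{mp}$ is the Kronecker delta.
   Context: $d\in\{2,3\}$; $\phi:\psi=\mathrm{tr}(\phi^T\psi)$, $\|\phi\|=(\phi:\phi)^{1/2}$, $\|\nabla\phi\|^2=\sum_{i,j}\|\nabla\phi_{ij}\|^2$. For symmetric positive definite $\phi=O^TDO$ and $g:(0,\infty)\to\mathbb R$, $g(\phi):=O^Tg(D)O$. $G=\ln$, $\beta(s)=s$, $H=\ln$; $G^L(s)=\ln s$ for $0<s\le L$, $s/L+\ln L-1$ for $s\ge L$; $\beta^L(s)=\min\{s,L\}$; $H^L(s)=\ln s$ for $s\ge1/L$, $Ls+\ln(1/L)-1$ for $s\le1/L$. $D\subset\mathbb R^d$ a bounded polytope, $\mathcal T_h$ a member of a regular (shape-regular) family of conforming simplicial partitions with mesh size $h$. $S^1_h$: continuous piecewise linear symmetric matrix fields; $S^1_{h,PD}$: those $\phi\in S^1_h$ with $\phi(P)$ positive definite at every vertex $P$; $\pi_h$: nodal interpolation at vertices onto continuous piecewise linears. Operator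 $\Lambda$: for $\phi\in S^1_{h,PD}$ and a simplex $K$ with vertices $P_0,\dots,P_d$, $B_K$ the matrix with columns $P_j-P_0$; for $j=1,\dots,d$, $a_j=\mathcal B(\phi(P_j))$, $a_0=\mathcal B(\phi(P_0))$, $g_j=\mathcal G'(\phi(P_j))$, $g_0=\mathcal G'(\phi(P_0))$; if $(a_j-a_0):(g_j-g_0)\ne0$, $\hat\Lambda_j=(1-\lambda_j)a_j+\lambda_ja_0$ with $\lambda_j=\frac{\mathrm{tr}(\mathcal H(g_j))-\mathrm{tr}(\mathcal H(g_0))-a_j:(g_j-g_0)}{(a_0-a_j):(g_j-g_0)}$, else $\hat\Lambda_j=a_j$; on $K$, $\Lambda_{m,p}(\phi)=\sum_{j=1}^d[(B_K^T)^{-1}]_{mj}\hat\Lambda_j[B_K^T]_{jp}$. *)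

theory Defs
  imports "HOL-Analysis.Analysis"
begin

type_synonym 'n mat = "real^'n^'n"

definition frob :: "'n::finite mat \<Rightarrow> 'n mat \<Rightarrow> real" where
  "frob A B = trace (transpose A ** B)"

definition frob_sq :: "'n::finite mat \<Rightarrow> real" where
  "frob_sq A = frob A A"

definition diagm :: "real^'n \<Rightarrow> 'n::finite mat" where
  "diagm lam = (\<chi> i j. if i = j then lam $ i else 0)"

definition sym_posdef :: "'n::finite mat \<Rightarrow> bool" where
  "sym_posdef A \<longleftrightarrow> transpose A = A \<and> (\<forall>x. x \<noteq> 0 \<longrightarrow> x \<bullet> (A *v x) > 0)"

text \<open>Matrix function g(phi) = O^T g(D) O for a symmetric matrix phi = O^T D O
  (eigen-decomposition chosen by Hilbert choice; the result does not depend on the choice).\<close>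
definition matfun :: "(real \<Rightarrow> real) \<Rightarrow> 'n::finite mat \<Rightarrow> 'n mat" where
  "matfun g A = (let (Q, lam) = (SOME (Q, lam). orthogonal_matrix Q \<and> A = transpose Q ** diagm lam ** Q)
                 in transpose Q ** diagm (\<chi> i. g (lam $ i)) ** Q)"

definition GL :: "real \<Rightarrow> real \<Rightarrow> real" where
  "GL L s = (if s \<le> L then ln s else s / L + ln L - 1)"

definition betaL :: "real \<Rightarrow> real \<Rightarrow> real" where
  "betaL L s = min s L"

definition HL :: "real \<Rightarrow> real \<Rightarrow> real" where
  "HL L s = (if s \<ge> 1 / L then ln s else L * s + ln (1 / L) - 1)"

definition admissible_triples :: "((real \<Rightarrow> real) \<times> (real \<Rightarrow> real) \<times> (real \<Rightarrow> real)) set" where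
  "admissible_triples = {(ln, \<lambda>s. s, ln)} \<union> {(GL L, betaL L, HL L) | L. L \<ge> 2}"

text \<open>A simplex with labelled vertices: P0 and P j, j ranging over the d coordinate indices.\<close>
type_synonym 'n lsimplex = "(real^'n) \<times> ('n \<Rightarrow> real^'n)"

definition verts :: "'n::finite lsimplex \<Rightarrow> (real^'n) set" where
  "verts K = insert (fst K) (range (snd K))"

definition shull :: "'n::finite lsimplex \<Rightarrow> (real^'n) set" where
  "shull K = convex hull (verts K)"

definition is_simplex :: "'n::finite lsimplex \<Rightarrow> bool" where
  "is_simplex K \<longleftrightarrow> card (verts K) = CARD('n) + 1 \<and> \<not> affine_dependent (verts K)"

definition BK :: "'n::finite lsimplex \<Rightarrow> 'n mat" where
  "BK K = (\<chi> i j. (snd K j - fst K) $ i)"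

definition inradius :: "(real^'n::finite) set \<Rightarrow> real" where
  "inradius S = Sup {r. \<exists>x. ball x r \<subseteq> S}"

definition conforming_partition :: "(real^'n::finite) set \<Rightarrow> 'n lsimplex set \<Rightarrow> bool" where
  "conforming_partition D T \<longleftrightarrow> finite T \<and> T \<noteq> {} \<and> (\<forall>K\<in>T. is_simplex K)
     \<and> (\<Union>K\<in>T. shull K) = D
     \<and> (\<forall>K\<in>T. \<forall>K'\<in>T. verts K = verts K' \<longrightarrow> K = K')
     \<and> (\<forall>K\<in>T. \<forall>K'\<in>T. shull K \<inter> shull K' = convex hull (verts K \<inter> verts K'))"

definition meshsize :: "'n::finite lsimplex set \<Rightarrow> real" where
  "meshsize T = Max ((\<lambda>K. diameter (shull K)) ` T)"

definition S1h :: "(real^'n::finite) set \<Rightarrow> 'n lsimplex set \<Rightarrow> (real^'n \<Rightarrow> 'n mat) set" where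
  "S1h D T = {\<phi>. continuous_on D \<phi> \<and> (\<forall>x\<in>D. transpose (\<phi> x) = \<phi> x)
     \<and> (\<forall>K\<in>T. \<exists>f c. linear f \<and> (\<forall>x\<in>shull K. \<phi> x = f x + c))}"

definition S1hPD :: "(real^'n::finite) set \<Rightarrow> 'n lsimplex set \<Rightarrow> (real^'n \<Rightarrow> 'n mat) set" where
  "S1hPD D T = {\<phi>\<in>S1h D T. \<forall>K\<in>T. \<forall>P\<in>verts K. sym_posdef (\<phi> P)}"

text \<open>Nodal interpolant on K (= restriction of pi_h to K) of a matrix field v,
  via barycentric coordinates.\<close>
definition interpK :: "'n::finite lsimplex \<Rightarrow> (real^'n \<Rightarrow> 'n mat) \<Rightarrow> real^'n \<Rightarrow> 'n mat" where
  "interpK K v x = (let lam = matrix_inv (BK K) *v (x - fst K)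
     in (1 - sum (\<lambda>j. lam $ j) UNIV) *\<^sub>R v (fst K) + (\<Sum>j\<in>UNIV. (lam $ j) *\<^sub>R v (snd K j)))"

definition grad_sq :: "'n::finite lsimplex \<Rightarrow> (real^'n \<Rightarrow> 'n mat) \<Rightarrow> real^'n \<Rightarrow> real" where
  "grad_sq K \<phi> x = (\<Sum>i\<in>UNIV. \<Sum>j\<in>UNIV. \<Sum>k\<in>UNIV.
      (frechet_derivative (\<lambda>y. \<phi> y $ i $ j) (at x within shull K) (axis k 1))\<^sup>2)"

definition Lambda_hat :: "(real \<Rightarrow> real) \<Rightarrow> (real \<Rightarrow> real) \<Rightarrow> (real \<Rightarrow> real)
    \<Rightarrow> 'n::finite lsimplex \<Rightarrow> (real^'n \<Rightarrow> 'n mat) \<Rightarrow> 'n \<Rightarrow> 'n mat" where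
  "Lambda_hat G \<beta> H K \<phi> j =
    (let a0 = matfun \<beta> (\<phi> (fst K)); aj = matfun \<beta> (\<phi> (snd K j));
         g0 = matfun (deriv G) (\<phi> (fst K)); gj = matfun (deriv G) (\<phi> (snd K j))
     in if frob (aj - a0) (gj - g0) \<noteq> 0 then
          (let lamj = (trace (matfun H gj) - trace (matfun H g0) - frob aj (gj - g0))
                      / frob (a0 - aj) (gj - g0)
           in (1 - lamj) *\<^sub>R aj + lamj *\<^sub>R a0)
        else aj)"

definition Lambda :: "(real \<Rightarrow> real) \<Rightarrow> (real \<Rightarrow> real) \<Rightarrow> (real \<Rightarrow> real)
    \<Rightarrow> 'n::finite lsimplex \<Rightarrow> (real^'n \<Rightarrow> 'n mat) \<Rightarrow> 'n \<Rightarrow> 'n \<Rightarrow> 'n mat" where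
  "Lambda G \<beta> H K \<phi> m p =
    (\<Sum>j\<in>UNIV. (matrix_inv (transpose (BK K)) $ m $ j * transpose (BK K) $ j $ p)
                 *\<^sub>R Lambda_hat G \<beta> H K \<phi> j)"

end

theory Submission
  imports Defs
begin

text \<open>
  Fix a simplex \<open>K\<close> of diameter at most \<open>h\<close> and a field \<open>\<phi> = f + c\<close> affine on
  \<open>K\<close>. Since \<open>\<beta>\<close> is 1-Lipschitz, so is \<open>A \<mapsto> \<beta>(A)\<close> on symmetric matrices in the Frobenius
  norm; hence all values of \<open>\<beta>(\<phi>)\<close> on \<open>K\<close> lie within \<open>M = h |\<nabla>\<phi>|\<close> of each other.
  The nodal interpolant is a convex combination of vertex values, and each \<open>Lambda_hat j\<close> is a
  convex combination of \<open>\<beta>(\<phi>(P\<^sub>0))\<close> and \<open>\<beta>(\<phi>(P\<^sub>j))\<close> because its weight \<open>\<lambda>\<^sub>j\<close> lies in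
  \<open>[0,1]\<close> (numerator and denominator minus numerator are log-determinant divergences,
  hence nonnegative). Both are therefore within \<open>M\<close> of \<open>\<beta>(\<phi>(x))\<close>; the coefficients of
  \<open>\<Lambda>\<^sub>m\<^sub>p\<close> sum to \<open>\<delta>\<^sub>m\<^sub>p\<close> and are bounded by the shape-regularity constant \<open>\<sigma>\<close>.
  Integrating the pointwise bounds and using \<open>\<integral>\<^sub>K |\<nabla>\<phi>|\<^sup>2 = |\<nabla>\<phi>|\<^sup>2 |K|\<close> gives the
  estimate with \<open>C = 1 + (d \<sigma>)\<^sup>2\<close> in every dimension \<open>d\<close>.
\<close>

text \<open>The Frobenius product is the Euclidean inner product of the matrix type, so all
  norm/inner-product facts of the library apply to it.\<close>

lemma frob_inner: "frob A B = A \<bullet> B"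
proof -
  have "frob A B = (\<Sum>i\<in>UNIV. \<Sum>k\<in>UNIV. A$k$i * B$k$i)"
    unfolding frob_def trace_def matrix_matrix_mult_def transpose_def by simp
  also have "\<dots> = (\<Sum>k\<in>UNIV. \<Sum>i\<in>UNIV. A$k$i * B$k$i)" by (rule sum.swap)
  also have "\<dots> = A \<bullet> B" unfolding inner_vec_def by (simp add: inner_real_def)
  finally show ?thesis .
qed

lemma frob_sq_norm: "frob_sq A = (norm A)\<^sup>2"
  by (simp add: frob_sq_def frob_inner dot_square_norm)

section \<open>The spectral theorem for symmetric matrices\<close>

lemma diagm_mult_right: "(X ** diagm u) $ i $ j = X $ i $ j * u $ j"
  unfolding diagm_def matrix_matrix_mult_def by (simp add: if_distrib cong: if_cong)

lemma diagm_mult_left: "(diagm u ** X) $ i $ j = u $ i * X $ i $ j"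
proof -
  have "\<And>k. (if i = k then u $ i else 0) * X $ k $ j = (if k = i then u $ i * X $ i $ j else 0)"
    by auto
  then show ?thesis unfolding diagm_def matrix_matrix_mult_def by simp
qed

lemma transpose_diagm: "transpose (diagm u) = diagm u"
  by (simp add: transpose_def diagm_def vec_eq_iff)

lemma transpose_conj_diagm: "transpose (transpose Q ** diagm u ** Q) = transpose Q ** diagm u ** Q"
  by (simp add: matrix_transpose_mul transpose_diagm matrix_mul_assoc)

lemma symmetric_inner_commute:
  fixes A :: "real^'n::finite^'n"
  assumes "transpose A = A"
  shows "x \<bullet> (A *v y) = (A *v x) \<bullet> y"
proof -
  have "x \<bullet> (A *v y) = (x v* A) \<bullet> y" by (simp add: dot_lmul_matrix)
  also have "x v* A = transpose A *v x" by simp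
  finally show ?thesis using assms by simp
qed

text \<open>The defect \<open>q(v) = \<mu> |v|\<^sup>2 - v\<cdot>Av\<close> is nonnegative on the
  subspace; along \<open>u + t r\<close> with residual \<open>r = \<mu> u - A u\<close> it equals
  \<open>2t|r|\<^sup>2 + t\<^sup>2 q(r)\<close>, which is negative for a suitable \<open>t < 0\<close> unless \<open>r = 0\<close>.\<close>

lemma rayleigh_maximiser_is_eigenvector:
  fixes A :: "real^'n::finite^'n"
  assumes sym: "transpose A = A" and V: "subspace V" and inv: "\<And>v. v \<in> V \<Longrightarrow> A *v v \<in> V"
    and u: "u \<in> V" "norm u = 1"
    and max: "\<And>v. v \<in> V \<Longrightarrow> v \<bullet> (A *v v) \<le> (u \<bullet> (A *v u)) * (v \<bullet> v)"
  shows "A *v u = (u \<bullet> (A *v u)) *\<^sub>R u"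
proof -
  define \<mu> where "\<mu> = u \<bullet> (A *v u)"
  define q where "q v = \<mu> * (v \<bullet> v) - v \<bullet> (A *v v)" for v
  have q_nonneg: "v \<in> V \<Longrightarrow> q v \<ge> 0" for v using max[of v] by (simp add: q_def \<mu>_def)
  define r where "r = \<mu> *\<^sub>R u - A *v u"
  have rV: "r \<in> V" unfolding r_def using V u inv by (simp add: subspace_diff subspace_scale)
  have uu: "u \<bullet> u = 1" using u by (simp add: dot_square_norm)
  have q_line: "q (u + t *\<^sub>R r) = 2 * t * (r \<bullet> r) + t\<^sup>2 * q r" for t
  proof -
    have s1: "r \<bullet> (A *v u) = u \<bullet> (A *v r)"
      using symmetric_inner_commute[OF sym, of u r] by (simp add: inner_commute)
    have s2: "r \<bullet> r = \<mu> * (r \<bullet> u) - r \<bullet> (A *v u)"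
      unfolding r_def by (simp add: inner_diff_right inner_diff_left inner_commute algebra_simps)
    show ?thesis unfolding q_def
      by (simp add: matrix_vector_right_distrib inner_add_left inner_add_right
          matrix_vector_mult_scaleR algebra_simps power2_eq_square uu \<mu>_def[symmetric] s1
          inner_commute[of u r]) (use s2 s1 in algebra)
  qed
  define R where "R = r \<bullet> r"
  define c where "c = q r"
  have c0: "c \<ge> 0" using q_nonneg[OF rV] by (simp add: c_def)
  define t where "t = - R / (c + 1)"
  have "0 \<le> q (u + t *\<^sub>R r)" using q_nonneg V u rV by (simp add: subspace_add subspace_scale)
  also have "q (u + t *\<^sub>R r) = R\<^sup>2 * (- c - 2) / (c + 1)\<^sup>2"
    unfolding q_line c_def[symmetric] R_def[symmetric] t_def using c0
    by (simp add: divide_simps power2_eq_square) (simp add: algebra_simps)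
  finally have "0 \<le> R\<^sup>2 * (- c - 2)" using c0 by (simp add: zero_le_divide_iff)
  then have "R = 0" using c0 by (smt (verit) mult_pos_neg zero_less_power2)
  then show ?thesis by (simp add: R_def r_def \<mu>_def)
qed

text \<open>On a nonzero subspace the Rayleigh quotient attains its maximum on the (compact) unit
  sphere.\<close>

lemma rayleigh_maximiser_exists:
  fixes A :: "real^'n::finite^'n"
  assumes V: "subspace V" and nonzero: "V \<noteq> {0}"
  obtains u where "u \<in> V" "norm u = 1"
    "\<And>v. v \<in> V \<Longrightarrow> v \<bullet> (A *v v) \<le> (u \<bullet> (A *v u)) * (v \<bullet> v)"
proof -
  obtain w where w: "w \<in> V" "w \<noteq> 0" using subspace_0[OF V] nonzero by auto
  let ?S = "sphere 0 1 \<inter> V"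
  have cS: "compact ?S" by (rule compact_Int_closed) (auto simp: closed_subspace V)
  have w1: "(1 / norm w) *\<^sub>R w \<in> ?S" using w V by (auto simp: subspace_scale)
  have cont: "continuous_on ?S (\<lambda>v. v \<bullet> (A *v v))"
    by (intro continuous_intros linear_continuous_on matrix_vector_mul_linear)
  obtain u where u: "u \<in> ?S" and umax: "\<And>v. v \<in> ?S \<Longrightarrow> v \<bullet> (A *v v) \<le> u \<bullet> (A *v u)"
    using continuous_attains_sup[OF cS _ cont] w1 by blast
  have "v \<bullet> (A *v v) \<le> (u \<bullet> (A *v u)) * (v \<bullet> v)" if vV: "v \<in> V" for v
  proof (cases "v = 0")
    case False
    define v' where "v' = (1 / norm v) *\<^sub>R v"
    have "v' \<in> ?S" using vV False V by (auto simp: v'_def subspace_scale)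
    then have le: "v' \<bullet> (A *v v') \<le> u \<bullet> (A *v u)" by (rule umax)
    have "v \<bullet> (A *v v) = (norm v)\<^sup>2 * (v' \<bullet> (A *v v'))"
      using False by (simp add: v'_def matrix_vector_mult_scaleR power2_eq_square)
    also have "\<dots> \<le> (norm v)\<^sup>2 * (u \<bullet> (A *v u))" using le by (simp add: mult_left_mono)
    finally show ?thesis by (simp add: dot_square_norm mult.commute)
  qed simp
  then show ?thesis using that u by auto
qed

lemma eigenvector_complement:
  fixes A :: "real^'n::finite^'n"
  assumes sym: "transpose A = A" and V: "subspace V" and inv: "\<forall>v\<in>V. A *v v \<in> V"
    and u: "u \<in> V" "norm u = 1" and eig: "A *v u = \<mu> *\<^sub>R u"
  defines "V' \<equiv> V \<inter> {v. u \<bullet> v = 0}"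
  shows "subspace V'" and "\<forall>v\<in>V'. A *v v \<in> V'" and "dim V' < dim V"
    and "\<And>v. v \<in> V \<Longrightarrow> v - (u \<bullet> v) *\<^sub>R u \<in> V'"
proof -
  have uu: "u \<bullet> u = 1" using u by (simp add: dot_square_norm)
  show sV': "subspace V'" unfolding V'_def
    using subspace_Int[of "{True, False}" "\<lambda>b. if b then V else {v. u \<bullet> v = 0}"] V
      subspace_hyperplane[of u]
    by (simp add: Int_commute)
  show "\<forall>v\<in>V'. A *v v \<in> V'"
  proof
    fix v assume "v \<in> V'"
    then have "v \<in> V" "u \<bullet> v = 0" by (auto simp: V'_def)
    moreover have "u \<bullet> (A *v v) = (A *v u) \<bullet> v" by (rule symmetric_inner_commute[OF sym])
    ultimately show "A *v v \<in> V'" using inv eig by (simp add: V'_def)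
  qed
  have "u \<notin> V'" using uu by (simp add: V'_def)
  then have "V' \<subset> V" using u unfolding V'_def by blast
  moreover have "span V' = V'" "span V = V" using sV' V by (simp_all add: span_eq_iff)
  ultimately have "span V' \<subset> span V" by (simp only:)
  then show "dim V' < dim V" by (rule dim_psubset)
  show "v - (u \<bullet> v) *\<^sub>R u \<in> V'" if "v \<in> V" for v
    using that u V uu by (auto simp: V'_def subspace_diff subspace_scale inner_diff_right)
qed

text \<open>Every invariant subspace of a symmetric matrix has an orthonormal eigenbasis:
  take a Rayleigh maximiser and recurse on its orthogonal complement.\<close>

lemma invariant_subspace_eigenbasis:
  fixes A :: "real^'n::finite^'n"
  assumes sym: "transpose A = A"
  shows "subspace V \<Longrightarrow> (\<forall>v\<in>V. A *v v \<in> V) \<Longrightarrow>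
    \<exists>B. B \<subseteq> V \<and> pairwise orthogonal B \<and> (\<forall>u\<in>B. norm u = 1 \<and> (\<exists>\<mu>. A *v u = \<mu> *\<^sub>R u))
        \<and> span B = V"
proof (induction "dim V" arbitrary: V rule: less_induct)
  case less
  note V = less.prems(1) and inv = less.prems(2)
  show ?case
  proof (cases "V = {0}")
    case True then show ?thesis by (intro exI[of _ "{}"]) auto
  next
    case False
    then obtain u where uV: "u \<in> V" and un: "norm u = 1"
      and rayleigh: "\<And>v. v \<in> V \<Longrightarrow> v \<bullet> (A *v v) \<le> (u \<bullet> (A *v u)) * (v \<bullet> v)"
      using rayleigh_maximiser_exists[OF V] by blast
    have eig: "A *v u = (u \<bullet> (A *v u)) *\<^sub>R u"
      by (rule rayleigh_maximiser_is_eigenvector[OF sym V _ uV un rayleigh]) (use inv in auto)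
    define V' where "V' = V \<inter> {v. u \<bullet> v = 0}"
    note complement = eigenvector_complement[OF sym V inv uV un eig, folded V'_def]
    obtain B' where B': "B' \<subseteq> V'" "pairwise orthogonal B'"
      "\<forall>u\<in>B'. norm u = 1 \<and> (\<exists>\<mu>. A *v u = \<mu> *\<^sub>R u)" "span B' = V'"
      using less.hyps[OF complement(3,1,2)] by blast
    have uB': "\<forall>y\<in>B'. u \<bullet> y = 0" using B'(1) by (auto simp: V'_def)
    show ?thesis
    proof (intro exI[of _ "insert u B'"] conjI)
      show "insert u B' \<subseteq> V" using B'(1) uV by (auto simp: V'_def)
      show "pairwise orthogonal (insert u B')"
        using B'(2) uB' by (auto simp: pairwise_insert orthogonal_def inner_commute)
      show "\<forall>v\<in>insert u B'. norm v = 1 \<and> (\<exists>\<mu>. A *v v = \<mu> *\<^sub>R v)"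
        using B'(3) un eig by auto
      show "span (insert u B') = V"
      proof
        show "span (insert u B') \<subseteq> V" using B'(1) uV V by (intro span_minimal) (auto simp: V'_def)
        show "V \<subseteq> span (insert u B')"
        proof
          fix v assume "v \<in> V"
          then have "v - (u \<bullet> v) *\<^sub>R u \<in> span (insert u B')"
            using complement(4) B'(4) span_mono[of B' "insert u B'"] by auto
          moreover have "(u \<bullet> v) *\<^sub>R u \<in> span (insert u B')" by (intro span_mul span_base) simp
          ultimately show "v \<in> span (insert u B')" using span_add by fastforce
        qed
      qed
    qed
  qed
qed

text \<open>Spectral theorem: a symmetric matrix is orthogonally diagonalisable; the rows of
  \<open>Q\<close> form an orthonormal eigenbasis.\<close>

lemma symmetric_spectral_decomposition:
  fixes A :: "real^'n::finite^'n"
  assumes sym: "transpose A = A"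
  shows "\<exists>Q lam. orthogonal_matrix Q \<and> A = transpose Q ** diagm lam ** Q"
proof -
  obtain B where B: "pairwise orthogonal B" "\<forall>u\<in>B. norm u = 1 \<and> (\<exists>\<mu>. A *v u = \<mu> *\<^sub>R u)"
      "span B = UNIV"
    using invariant_subspace_eigenbasis[OF sym, of UNIV] by auto
  have ind: "independent B" using B(1,2) by (intro pairwise_orthogonal_independent) auto
  have fin: "finite B" and "card B = dim (span B)" using indep_card_eq_dim_span[OF ind] by auto
  then have cB: "card B = CARD('n)" using B(3) by (simp add: dim_UNIV)
  obtain e :: "'n \<Rightarrow> real^'n" where e: "bij_betw e UNIV B"
    using finite_same_card_bij[of "UNIV::'n set" B] fin cB by auto
  then have eB: "e i \<in> B" for i by (auto simp: bij_betw_def)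
  have einj: "e i = e j \<Longrightarrow> i = j" for i j using e by (auto simp: bij_betw_def inj_def)
  obtain m where m: "\<forall>u\<in>B. A *v u = m u *\<^sub>R u" using B(2) by metis
  define Q where "Q = (\<chi> i. e i)"
  define lam where "lam = (\<chi> i. m (e i))"
  have orthonormal: "e i \<bullet> e j = (if i = j then 1 else 0)" for i j
  proof (cases "i = j")
    case True then show ?thesis using B(2) eB[of i] by (simp add: dot_square_norm)
  next
    case False then have "e i \<noteq> e j" using einj by blast
    then show ?thesis using B(1) eB[of i] eB[of j] False by (auto simp: pairwise_def orthogonal_def)
  qed
  have QQt: "Q ** transpose Q = mat 1"
    by (simp add: vec_eq_iff matrix_matrix_mult_def transpose_def Q_def mat_def
        orthonormal[unfolded inner_vec_def inner_real_def])
  then have QtQ: "transpose Q ** Q = mat 1" by (simp add: matrix_left_right_inverse)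
  have AQt: "A ** transpose Q = transpose Q ** diagm lam"
  proof -
    have "(A ** transpose Q) $ a $ i = (transpose Q ** diagm lam) $ a $ i" for a i
    proof -
      have "(A ** transpose Q) $ a $ i = (A *v e i) $ a"
        by (simp add: matrix_matrix_mult_def transpose_def Q_def matrix_vector_mult_def)
      also have "\<dots> = m (e i) * e i $ a" using m eB[of i] by simp
      finally show ?thesis by (simp add: diagm_mult_right transpose_def Q_def lam_def)
    qed
    then show ?thesis by (simp add: vec_eq_iff)
  qed
  have "A = A ** (transpose Q ** Q)" by (simp add: QtQ)
  also have "\<dots> = transpose Q ** diagm lam ** Q" by (simp add: matrix_mul_assoc AQt)
  finally show ?thesis using QQt QtQ by (auto simp: orthogonal_matrix_def)
qed

section \<open>Matrix functions\<close>

text \<open>Two orthogonal diagonalisations of the same matrix are intertwined by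
  \<open>R = P Q\<^sup>T\<close>, which then also intertwines \<open>f\<close> applied to the eigenvalues; hence
  \<open>f(A)\<close> does not depend on the chosen diagonalisation.\<close>

lemma spectral_function_independent:
  fixes Q P :: "real^'n::finite^'n"
  assumes oQ: "orthogonal_matrix Q" and oP: "orthogonal_matrix P"
    and eq: "transpose Q ** diagm x ** Q = transpose P ** diagm y ** P"
  shows "transpose Q ** diagm (\<chi> i. f (x$i)) ** Q = transpose P ** diagm (\<chi> i. f (y$i)) ** P"
proof -
  have QQ: "Q ** transpose Q = mat 1" "transpose Q ** Q = mat 1"
    using oQ by (auto simp: orthogonal_matrix_def)
  have PP: "P ** transpose P = mat 1" "transpose P ** P = mat 1"
    using oP by (auto simp: orthogonal_matrix_def)
  have QQ': "Q ** (transpose Q ** X) = X" "transpose Q ** (Q ** X) = X" for X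
    by (simp_all add: matrix_mul_assoc QQ)
  have PP': "P ** (transpose P ** X) = X" "transpose P ** (P ** X) = X" for X
    by (simp_all add: matrix_mul_assoc PP)
  define R where "R = P ** transpose Q"
  have "R ** diagm x = P ** (transpose Q ** diagm x ** Q) ** transpose Q"
    by (simp add: R_def matrix_mul_assoc[symmetric] QQ QQ')
  also have "\<dots> = P ** (transpose P ** diagm y ** P) ** transpose Q" by (simp add: eq)
  also have "\<dots> = diagm y ** R" by (simp add: R_def matrix_mul_assoc[symmetric] PP PP')
  finally have RD: "R ** diagm x = diagm y ** R" .
  have RDf: "R ** diagm (\<chi> i. f (x$i)) = diagm (\<chi> i. f (y$i)) ** R"
  proof -
    have "R $ i $ j * f (x $ j) = f (y $ i) * R $ i $ j" for i j
    proof -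
      have "R $ i $ j * x $ j = y $ i * R $ i $ j"
        using arg_cong[OF RD, of "\<lambda>M. M $ i $ j"] by (simp add: diagm_mult_right diagm_mult_left)
      then show ?thesis by (cases "R $ i $ j = 0") auto
    qed
    then show ?thesis by (simp add: vec_eq_iff diagm_mult_right diagm_mult_left)
  qed
  have RQ: "R ** Q = P" by (simp add: R_def matrix_mul_assoc[symmetric] QQ)
  have PR: "transpose P ** R = transpose Q" by (simp add: R_def matrix_mul_assoc PP)
  have "transpose P ** diagm (\<chi> i. f (y$i)) ** P = transpose P ** (diagm (\<chi> i. f (y$i)) ** R) ** Q"
    by (simp add: RQ[symmetric] matrix_mul_assoc)
  also have "\<dots> = (transpose P ** R) ** diagm (\<chi> i. f (x$i)) ** Q"
    by (metis RDf matrix_mul_assoc)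
  also have "\<dots> = transpose Q ** diagm (\<chi> i. f (x$i)) ** Q" by (simp add: PR)
  finally show ?thesis by simp
qed

lemma matfun_spectral:
  fixes Q :: "real^'n::finite^'n"
  assumes oQ: "orthogonal_matrix Q" and A: "A = transpose Q ** diagm lam ** Q"
  shows "matfun g A = transpose Q ** diagm (\<chi> i. g (lam$i)) ** Q"
proof -
  let ?P = "\<lambda>(Q, lam). orthogonal_matrix Q \<and> A = transpose Q ** diagm lam ** Q"
  have ex: "\<exists>x. ?P x" using oQ A by auto
  obtain Q' lam' where ch: "(SOME x. ?P x) = (Q', lam')" by (cases "SOME x. ?P x") auto
  have "?P (Q', lam')" using someI_ex[OF ex] ch by simp
  then have o': "orthogonal_matrix Q'" and A': "A = transpose Q' ** diagm lam' ** Q'" by auto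
  have "matfun g A = transpose Q' ** diagm (\<chi> i. g (lam'$i)) ** Q'"
    unfolding matfun_def ch by simp
  also have "\<dots> = transpose Q ** diagm (\<chi> i. g (lam$i)) ** Q"
    by (rule spectral_function_independent[OF o' oQ]) (use A A' in simp)
  finally show ?thesis .
qed

lemma posdef_eigenvalues_pos:
  fixes A Q :: "real^'n::finite^'n"
  assumes pd: "sym_posdef A" and Q: "orthogonal_matrix Q" "A = transpose Q ** diagm s ** Q"
  shows "s $ i > 0"
proof -
  define e :: "real^'n" where "e = axis i 1"
  define x where "x = transpose Q *v e"
  have QQ: "Q ** transpose Q = mat 1" using Q(1) by (simp add: orthogonal_matrix_def)
  have Qx: "Q *v x = e"
    unfolding x_def by (simp add: matrix_vector_mul_assoc QQ del: transpose_matrix_vector)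
  have "x \<noteq> 0" using Qx by (auto simp: e_def)
  have De: "diagm s *v e = s$i *\<^sub>R e"
  proof -
    have "(if a = j then s $ a else 0) * (if j = i then 1 else 0)
        = (if j = a then (if a = i then s$i else 0) else 0)" for a j :: 'n
      by auto
    then show ?thesis by (simp add: vec_eq_iff matrix_vector_mult_def diagm_def e_def axis_def)
  qed
  have "A *v x = s$i *\<^sub>R x"
    unfolding Q(2)
    by (simp add: matrix_vector_mul_assoc[symmetric] Qx De matrix_vector_mult_scaleR
        del: transpose_matrix_vector) (simp add: x_def del: transpose_matrix_vector)
  then have "x \<bullet> (A *v x) = s$i * (x \<bullet> x)" by simp
  moreover have "x \<bullet> (A *v x) > 0" using pd \<open>x \<noteq> 0\<close> by (simp add: sym_posdef_def)
  moreover have "x \<bullet> x > 0" using \<open>x \<noteq> 0\<close> by simp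
  ultimately show ?thesis by (simp add: zero_less_mult_iff)
qed

text \<open>For two orthogonal matrices the squared entries of \<open>Q P\<^sup>T\<close> form a doubly
  stochastic array; it weights the interaction between the eigenvalues of two matrices
  diagonalised by \<open>Q\<close> and \<open>P\<close>.\<close>

definition overlap_weight :: "real^'n::finite^'n \<Rightarrow> real^'n^'n \<Rightarrow> 'n \<Rightarrow> 'n \<Rightarrow> real" where
  "overlap_weight Q P i k = ((Q ** transpose P) $ i $ k)\<^sup>2"

lemma overlap_weight_nonneg: "overlap_weight Q P i k \<ge> 0"
  by (simp add: overlap_weight_def)

lemma overlap_weight_row_sum:
  fixes Q P :: "real^'n::finite^'n"
  assumes "orthogonal_matrix Q" "orthogonal_matrix P"
  shows "(\<Sum>k\<in>UNIV. overlap_weight Q P i k) = 1"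
proof -
  define M where "M = Q ** transpose P"
  have "M ** transpose M = mat 1"
    using orthogonal_matrix_mul[of Q "transpose P"] assms by (simp add: M_def orthogonal_matrix_def)
  then have "(\<Sum>k\<in>UNIV. M$i$k * M$i$k) = 1"
    by (simp add: vec_eq_iff matrix_matrix_mult_def transpose_def mat_def)
  then show ?thesis unfolding overlap_weight_def M_def[symmetric] by (simp add: power2_eq_square)
qed

lemma overlap_weight_col_sum:
  fixes Q P :: "real^'n::finite^'n"
  assumes "orthogonal_matrix Q" "orthogonal_matrix P"
  shows "(\<Sum>i\<in>UNIV. overlap_weight Q P i k) = 1"
proof -
  define M where "M = Q ** transpose P"
  have "transpose M ** M = mat 1"
    using orthogonal_matrix_mul[of Q "transpose P"] assms by (simp add: M_def orthogonal_matrix_def)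
  then have "(\<Sum>i\<in>UNIV. M$i$k * M$i$k) = 1"
    by (simp add: vec_eq_iff matrix_matrix_mult_def transpose_def mat_def)
  then show ?thesis unfolding overlap_weight_def M_def[symmetric] by (simp add: power2_eq_square)
qed

lemma sum_overlap_row:
  "orthogonal_matrix Q \<Longrightarrow> orthogonal_matrix P \<Longrightarrow>
   (\<Sum>i\<in>UNIV. f i) = (\<Sum>i\<in>UNIV. \<Sum>k\<in>UNIV. overlap_weight Q P i k * f i)"
  by (simp add: sum_distrib_right[symmetric] overlap_weight_row_sum)

lemma sum_overlap_col:
  "orthogonal_matrix Q \<Longrightarrow> orthogonal_matrix P \<Longrightarrow>
   (\<Sum>k\<in>UNIV. f k) = (\<Sum>i\<in>UNIV. \<Sum>k\<in>UNIV. overlap_weight Q P i k * f k)"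
  by (subst sum.swap) (simp add: sum_distrib_right[symmetric] overlap_weight_col_sum)

lemma frob_spectral:
  fixes Q P :: "real^'n::finite^'n"
  shows "frob (transpose Q ** diagm u ** Q) (transpose P ** diagm v ** P)
     = (\<Sum>i\<in>UNIV. \<Sum>k\<in>UNIV. overlap_weight Q P i k * u$i * v$k)"
proof -
  define M where "M = Q ** transpose P"
  have diag: "(diagm u ** M ** diagm v ** transpose M) $ i $ i
      = u$i * (\<Sum>k\<in>UNIV. M$i$k * v$k * M$i$k)" for i
  proof -
    have "(diagm u ** M ** diagm v ** transpose M) $ i $ i = u$i * (M ** diagm v ** transpose M) $ i $ i"
      by (simp add: matrix_mul_assoc[symmetric] diagm_mult_left)
    also have "(M ** diagm v ** transpose M) $ i $ i
        = (\<Sum>k\<in>UNIV. (M ** diagm v)$i$k * transpose M $k $i)"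
      by (simp add: matrix_matrix_mult_def[of "M ** diagm v"])
    finally show ?thesis by (simp add: diagm_mult_right transpose_def)
  qed
  have "frob (transpose Q ** diagm u ** Q) (transpose P ** diagm v ** P)
      = trace (transpose Q ** (diagm u ** Q ** transpose P ** diagm v ** P))"
    unfolding frob_def transpose_conj_diagm by (simp add: matrix_mul_assoc)
  also have "\<dots> = trace ((diagm u ** Q ** transpose P ** diagm v ** P) ** transpose Q)"
    by (rule trace_mul_sym)
  also have "\<dots> = trace (diagm u ** M ** diagm v ** transpose M)"
    by (simp add: M_def matrix_transpose_mul matrix_mul_assoc)
  also have "\<dots> = (\<Sum>i\<in>UNIV. \<Sum>k\<in>UNIV. overlap_weight Q P i k * u$i * v$k)"
    by (simp add: trace_def diag overlap_weight_def M_def[symmetric] sum_distrib_left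
        power2_eq_square algebra_simps)
  finally show ?thesis .
qed

lemma frob_spectral_same:
  fixes Q :: "real^'n::finite^'n"
  assumes "orthogonal_matrix Q"
  shows "frob (transpose Q ** diagm u ** Q) (transpose Q ** diagm v ** Q) = (\<Sum>i\<in>UNIV. u$i * v$i)"
proof -
  have "overlap_weight Q Q i k * u$i * v$k = (if k = i then u$i * v$i else 0)" for i k
    using assms by (simp add: overlap_weight_def orthogonal_matrix_def mat_def)
  then show ?thesis by (simp add: frob_spectral)
qed

lemma trace_spectral:
  fixes Q :: "real^'n::finite^'n"
  assumes "orthogonal_matrix Q"
  shows "trace (transpose Q ** diagm u ** Q) = (\<Sum>i\<in>UNIV. u$i)"
proof -
  have "trace (transpose Q ** diagm u ** Q) = trace (diagm u ** Q ** transpose Q)"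
    by (metis trace_mul_sym matrix_mul_assoc)
  also have "\<dots> = trace (diagm u)" using assms
    by (simp add: orthogonal_matrix_def matrix_mul_assoc[symmetric])
  also have "\<dots> = (\<Sum>i\<in>UNIV. u$i)" by (simp add: trace_def diagm_def)
  finally show ?thesis .
qed

lemma frob_sq_spectral_diff:
  fixes Q P :: "real^'n::finite^'n"
  assumes oQ: "orthogonal_matrix Q" and oP: "orthogonal_matrix P"
  shows "frob_sq (transpose Q ** diagm u ** Q - transpose P ** diagm v ** P)
    = (\<Sum>i\<in>UNIV. \<Sum>k\<in>UNIV. overlap_weight Q P i k * (u$i - v$k)\<^sup>2)"
proof -
  let ?X = "transpose Q ** diagm u ** Q" and ?Y = "transpose P ** diagm v ** P"
  let ?W = "overlap_weight Q P"
  have "frob_sq (?X - ?Y) = frob ?X ?X - 2 * frob ?X ?Y + frob ?Y ?Y"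
    by (simp add: frob_sq_def frob_inner inner_diff_left inner_diff_right inner_commute)
  also have "\<dots> = (\<Sum>i\<in>UNIV. \<Sum>k\<in>UNIV. ?W i k * (u$i * u$i))
       - 2 * (\<Sum>i\<in>UNIV. \<Sum>k\<in>UNIV. ?W i k * u$i * v$k)
       + (\<Sum>i\<in>UNIV. \<Sum>k\<in>UNIV. ?W i k * (v$k * v$k))"
    using frob_spectral_same[OF oQ, of u u] frob_spectral_same[OF oP, of v v]
      sum_overlap_row[OF oQ oP, of "\<lambda>i. u$i * u$i"] sum_overlap_col[OF oQ oP, of "\<lambda>k. v$k * v$k"]
    by (simp add: frob_spectral)
  also have "\<dots> = (\<Sum>i\<in>UNIV. \<Sum>k\<in>UNIV. ?W i k * (u$i - v$k)\<^sup>2)"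
    by (simp add: sum_distrib_left sum_subtractf[symmetric] sum.distrib[symmetric]
        power2_eq_square algebra_simps)
  finally show ?thesis .
qed

lemma matfun_lipschitz:
  fixes A B :: "real^'n::finite^'n"
  assumes sA: "transpose A = A" and sB: "transpose B = B"
    and lip: "\<And>s t. \<bar>f s - f t\<bar> \<le> \<bar>s - t\<bar>"
  shows "norm (matfun f A - matfun f B) \<le> norm (A - B)"
proof -
  obtain Q u where Q: "orthogonal_matrix Q" "A = transpose Q ** diagm u ** Q"
    using symmetric_spectral_decomposition[OF sA] by blast
  obtain P v where P: "orthogonal_matrix P" "B = transpose P ** diagm v ** P"
    using symmetric_spectral_decomposition[OF sB] by blast
  have "(norm (matfun f A - matfun f B))\<^sup>2
      = (\<Sum>i\<in>UNIV. \<Sum>k\<in>UNIV. overlap_weight Q P i k * (f (u$i) - f (v$k))\<^sup>2)"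
    unfolding matfun_spectral[OF Q] matfun_spectral[OF P] frob_sq_norm[symmetric]
    by (simp add: frob_sq_spectral_diff[OF Q(1) P(1)])
  also have "\<dots> \<le> (\<Sum>i\<in>UNIV. \<Sum>k\<in>UNIV. overlap_weight Q P i k * (u$i - v$k)\<^sup>2)"
    using lip by (intro sum_mono mult_left_mono overlap_weight_nonneg)
      (simp add: abs_le_square_iff)
  also have "\<dots> = (norm (A - B))\<^sup>2"
    unfolding Q(2) P(2) frob_sq_norm[symmetric] by (rule frob_sq_spectral_diff[OF Q(1) P(1), symmetric])
  finally show ?thesis by (rule power2_le_imp_le) simp
qed

text \<open>The log-determinant (Stein) divergence of two positive definite matrices
  \<open>A = Q\<^sup>T diag(\<alpha>) Q\<close> and \<open>B = P\<^sup>T diag(\<gamma>) P\<close>,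
  \<open>tr(-ln A) - tr(-ln B) - A : (A\<^sup>-\<^sup>1 - B\<^sup>-\<^sup>1)\<close>, equals the overlap-weighted sum of
  \<open>x - 1 - ln x\<close> at \<open>x = \<alpha>\<^sub>i / \<gamma>\<^sub>k\<close> and is therefore nonnegative.\<close>

lemma logdet_divergence_nonneg:
  fixes Q P :: "real^'n::finite^'n"
  assumes oQ: "orthogonal_matrix Q" and oP: "orthogonal_matrix P"
    and \<alpha>: "\<And>i. \<alpha>$i > 0" and \<gamma>: "\<And>k. \<gamma>$k > 0"
  shows "0 \<le> trace (transpose Q ** diagm (\<chi> i. - ln (\<alpha>$i)) ** Q)
             - trace (transpose P ** diagm (\<chi> k. - ln (\<gamma>$k)) ** P)
             - frob (transpose Q ** diagm \<alpha> ** Q)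
                 (transpose Q ** diagm (\<chi> i. 1 / \<alpha>$i) ** Q - transpose P ** diagm (\<chi> k. 1 / \<gamma>$k) ** P)"
    (is "0 \<le> ?D")
proof -
  let ?W = "overlap_weight Q P"
  have \<alpha>0: "\<alpha>$i \<noteq> 0" and \<gamma>0: "\<gamma>$i \<noteq> 0" for i using \<alpha>[of i] \<gamma>[of i] by auto
  have self: "frob (transpose Q ** diagm \<alpha> ** Q) (transpose Q ** diagm (\<chi> i. 1 / \<alpha>$i) ** Q)
      = (\<Sum>i\<in>UNIV. \<Sum>k\<in>UNIV. ?W i k * 1)"
    using \<alpha> sum_overlap_row[OF oQ oP, of "\<lambda>_. 1"]
    by (simp add: frob_spectral_same[OF oQ] less_imp_neq[symmetric])
  have cross: "frob (transpose Q ** diagm \<alpha> ** Q) (transpose P ** diagm (\<chi> k. 1 / \<gamma>$k) ** P)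
      = (\<Sum>i\<in>UNIV. \<Sum>k\<in>UNIV. ?W i k * (\<alpha>$i / \<gamma>$k))"
    by (simp add: frob_spectral)
  have "?D = (\<Sum>i\<in>UNIV. \<Sum>k\<in>UNIV. ?W i k * (- ln (\<alpha>$i)) - ?W i k * (- ln (\<gamma>$k)) - ?W i k * 1
         + ?W i k * (\<alpha>$i / \<gamma>$k))"
    using sum_overlap_row[OF oQ oP, of "\<lambda>i. - ln (\<alpha>$i)"] sum_overlap_col[OF oQ oP, of "\<lambda>k. - ln (\<gamma>$k)"]
    by (simp add: trace_spectral[OF oQ] trace_spectral[OF oP] frob_inner inner_diff_right
        self[unfolded frob_inner] cross[unfolded frob_inner] sum.distrib sum_subtractf sum_negf)
  also have "\<dots> = (\<Sum>i\<in>UNIV. \<Sum>k\<in>UNIV. ?W i k * (\<alpha>$i / \<gamma>$k - 1 - ln (\<alpha>$i / \<gamma>$k)))"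
    using \<alpha> \<gamma> by (intro sum.cong refl) (simp add: ln_div algebra_simps \<alpha>0 \<gamma>0)
  also have "\<dots> \<ge> 0"
    using \<alpha> \<gamma> ln_le_minus_one[of "\<alpha>$_ / \<gamma>$_"]
    by (intro sum_nonneg mult_nonneg_nonneg overlap_weight_nonneg) auto
  finally show ?thesis .
qed

section \<open>The admissible triples\<close>

text \<open>\<open>G\<^sup>L\<close> is differentiable with \<open>(G\<^sup>L)'(s) = 1 / min s L\<close>; at the junction \<open>s = L\<close> both
  one-sided difference quotients tend to \<open>1/L\<close>.\<close>

lemma GL_has_derivative_at_junction:
  fixes L :: real assumes L: "L > 0"
  shows "(GL L has_real_derivative 1 / L) (at L)"
proof -
  have "(ln has_real_derivative 1 / L) (at L)" using L by (auto intro!: derivative_eq_intros)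
  then have left: "((\<lambda>h. (ln (L + h) - ln L) / h) \<longlongrightarrow> 1 / L) (at_left 0)"
    by (simp add: DERIV_def filterlim_at_split)
  have "((\<lambda>h. (GL L (L + h) - GL L L) / h) \<longlongrightarrow> 1 / L) (at 0)"
    unfolding filterlim_at_split
  proof
    have "eventually (\<lambda>h. (GL L (L + h) - GL L L) / h = (ln (L + h) - ln L) / h) (at_left 0)"
      by (auto simp: GL_def eventually_at_left_field intro!: exI[of _ "-1"])
    then show "((\<lambda>h. (GL L (L + h) - GL L L) / h) \<longlongrightarrow> 1 / L) (at_left 0)"
      by (subst tendsto_cong) (use left in auto)
  next
    have "eventually (\<lambda>h. (GL L (L + h) - GL L L) / h = 1 / L) (at_right 0)"
      using L by (auto simp: GL_def eventually_at_right_field field_simps intro!: exI[of _ 1])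
    then show "((\<lambda>h. (GL L (L + h) - GL L L) / h) \<longlongrightarrow> 1 / L) (at_right 0)"
      by (subst tendsto_cong) auto
  qed
  then show ?thesis by (simp add: DERIV_def)
qed

lemma GL_has_derivative:
  fixes L s :: real assumes L: "L > 0" and s: "s > 0"
  shows "(GL L has_real_derivative 1 / min s L) (at s)"
proof (cases s L rule: linorder_cases)
  case less
  have ev: "eventually (\<lambda>x. GL L x = ln x) (nhds s)"
    using eventually_nhds_in_open[of "{..<L}" s] less by (auto elim!: eventually_mono simp: GL_def)
  have "(ln has_real_derivative 1 / s) (at s)" using s by (auto intro!: derivative_eq_intros)
  then show ?thesis using less by (subst DERIV_cong_ev[OF refl ev refl]) simp
next
  case equal
  then show ?thesis using GL_has_derivative_at_junction[OF L] by simp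
next
  case greater
  have ev: "eventually (\<lambda>x. GL L x = x / L + ln L - 1) (nhds s)"
    using eventually_nhds_in_open[of "{L<..}" s] greater by (auto elim!: eventually_mono simp: GL_def)
  have "((\<lambda>x. x / L + ln L - 1) has_real_derivative 1 / L) (at s)"
    using L by (auto intro!: derivative_eq_intros)
  then show ?thesis using greater by (subst DERIV_cong_ev[OF refl ev refl]) simp
qed

lemma admissible_triple_props:
  assumes "(G, \<beta>, H) \<in> admissible_triples"
  shows "\<And>s. s > 0 \<Longrightarrow> \<beta> s > 0 \<and> deriv G s = 1 / \<beta> s \<and> H (1 / \<beta> s) = - ln (\<beta> s)"
    and "\<And>s t. \<bar>\<beta> s - \<beta> t\<bar> \<le> \<bar>s - t\<bar>"
proof -
  have "(\<forall>s>0. \<beta> s > 0 \<and> deriv G s = 1 / \<beta> s \<and> H (1 / \<beta> s) = - ln (\<beta> s))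
       \<and> (\<forall>s t. \<bar>\<beta> s - \<beta> t\<bar> \<le> \<bar>s - t\<bar>)"
    using assms unfolding admissible_triples_def
  proof (elim UnE)
    assume "(G, \<beta>, H) \<in> {(ln, \<lambda>s. s, ln)}"
    then have e: "G = ln" "\<beta> = (\<lambda>s. s)" "H = ln" by auto
    have "deriv ln s = 1 / s" if "s > 0" for s :: real
      using that by (intro DERIV_imp_deriv) (auto intro!: derivative_eq_intros)
    then show ?thesis using e by (auto simp: ln_div)
  next
    assume "(G, \<beta>, H) \<in> {(GL L, betaL L, HL L) |L. 2 \<le> L}"
    then obtain L where e: "G = GL L" "\<beta> = betaL L" "H = HL L" and L: "L \<ge> 2" by auto
    have "deriv (GL L) s = 1 / min s L" if "s > 0" for s
      using that L by (intro DERIV_imp_deriv GL_has_derivative) auto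
    moreover have "HL L (1 / min s L) = - ln (min s L)" if "s > 0" for s
    proof -
      have "1 / min s L \<ge> 1 / L" using that L by (simp add: frac_le)
      then show ?thesis using that L by (simp add: HL_def ln_div)
    qed
    moreover have "\<bar>min s L - min t L\<bar> \<le> \<bar>s - t\<bar>" for s t :: real by (simp add: min_def)
    ultimately show ?thesis using e L by (auto simp: betaL_def)
  qed
  then show "\<And>s. s > 0 \<Longrightarrow> \<beta> s > 0 \<and> deriv G s = 1 / \<beta> s \<and> H (1 / \<beta> s) = - ln (\<beta> s)"
    and "\<And>s t. \<bar>\<beta> s - \<beta> t\<bar> \<le> \<bar>s - t\<bar>" by blast+
qed

lemma admissible_matfun_spectral:
  fixes A :: "real^'n::finite^'n"
  assumes tr: "(G, \<beta>, H) \<in> admissible_triples" and pd: "sym_posdef A"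
  obtains Q \<alpha> where "orthogonal_matrix Q" "\<And>i. \<alpha>$i > 0"
    "matfun \<beta> A = transpose Q ** diagm \<alpha> ** Q"
    "matfun (deriv G) A = transpose Q ** diagm (\<chi> i. 1 / \<alpha>$i) ** Q"
    "matfun H (matfun (deriv G) A) = transpose Q ** diagm (\<chi> i. - ln (\<alpha>$i)) ** Q"
proof -
  have "transpose A = A" using pd by (simp add: sym_posdef_def)
  then obtain Q s where Q: "orthogonal_matrix Q" "A = transpose Q ** diagm s ** Q"
    using symmetric_spectral_decomposition by blast
  have s: "s$i > 0" for i by (rule posdef_eigenvalues_pos[OF pd Q])
  note props = admissible_triple_props(1)[OF tr s]
  define \<alpha> where "\<alpha> = (\<chi> i. \<beta> (s$i))"
  have deriv_eq: "(\<chi> i. deriv G (s$i)) = (\<chi> i. 1 / \<alpha>$i)"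
    using props by (simp add: \<alpha>_def vec_eq_iff)
  have H_eq: "(\<chi> i. H ((\<chi> i. 1 / \<alpha>$i) $ i)) = (\<chi> i. - ln (\<alpha>$i))"
    using props by (simp add: \<alpha>_def vec_eq_iff)
  have G': "matfun (deriv G) A = transpose Q ** diagm (\<chi> i. 1 / \<alpha>$i) ** Q"
    using matfun_spectral[OF Q, of "deriv G"] deriv_eq by simp
  show ?thesis
  proof
    show "\<alpha>$i > 0" for i using props by (simp add: \<alpha>_def)
    show "matfun \<beta> A = transpose Q ** diagm \<alpha> ** Q" unfolding \<alpha>_def by (rule matfun_spectral[OF Q])
    show "matfun H (matfun (deriv G) A) = transpose Q ** diagm (\<chi> i. - ln (\<alpha>$i)) ** Q"
      using matfun_spectral[OF Q(1) G', of H] H_eq by simp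
  qed (use Q G' in auto)
qed

text \<open>The weight \<open>\<lambda>\<^sub>j\<close> in the definition of \<open>\<Lambda>\<close> lies in \<open>[0,1]\<close>, so \<open>Lambda_hat j\<close> is a
  convex combination of \<open>a\<^sub>j\<close> and \<open>a\<^sub>0\<close>: numerator and denominator minus numerator are
  both log-determinant divergences.\<close>

lemma Lambda_weight_unit_interval:
  fixes A0 Aj :: "real^'n::finite^'n"
  assumes tr: "(G, \<beta>, H) \<in> admissible_triples"
    and pd0: "sym_posdef A0" and pdj: "sym_posdef Aj"
  defines "a0 \<equiv> matfun \<beta> A0" and "aj \<equiv> matfun \<beta> Aj"
    and "g0 \<equiv> matfun (deriv G) A0" and "gj \<equiv> matfun (deriv G) Aj"
  assumes nz: "frob (aj - a0) (gj - g0) \<noteq> 0"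
  defines "num \<equiv> trace (matfun H gj) - trace (matfun H g0) - frob aj (gj - g0)"
    and "den \<equiv> frob (a0 - aj) (gj - g0)"
  shows "0 \<le> num / den \<and> num / den \<le> 1"
proof -
  obtain Q \<alpha> where Q: "orthogonal_matrix Q" "\<And>i. \<alpha>$i > 0" "aj = transpose Q ** diagm \<alpha> ** Q"
      "gj = transpose Q ** diagm (\<chi> i. 1 / \<alpha>$i) ** Q"
      "matfun H gj = transpose Q ** diagm (\<chi> i. - ln (\<alpha>$i)) ** Q"
    using admissible_matfun_spectral[OF tr pdj] unfolding aj_def gj_def by metis
  obtain P \<gamma> where P: "orthogonal_matrix P" "\<And>i. \<gamma>$i > 0" "a0 = transpose P ** diagm \<gamma> ** P"
      "g0 = transpose P ** diagm (\<chi> i. 1 / \<gamma>$i) ** P"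
      "matfun H g0 = transpose P ** diagm (\<chi> i. - ln (\<gamma>$i)) ** P"
    using admissible_matfun_spectral[OF tr pd0] unfolding a0_def g0_def by metis
  txt \<open>\<open>H(g)\<close> must be rewritten before \<open>g\<close> itself, hence the two unfolding steps.\<close>
  have num0: "0 \<le> num"
    unfolding num_def Q(5) P(5) unfolding Q(3,4) P(3,4)
    by (rule logdet_divergence_nonneg[OF Q(1) P(1) Q(2) P(2)])
  have "0 \<le> trace (matfun H g0) - trace (matfun H gj) - frob a0 (g0 - gj)"
    unfolding Q(5) P(5) unfolding Q(3,4) P(3,4)
    by (rule logdet_divergence_nonneg[OF P(1) Q(1) P(2) Q(2)])
  also have "\<dots> = den - num"
    by (simp add: num_def den_def frob_inner inner_diff_left inner_diff_right)
  finally have "num \<le> den" by simp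
  moreover have "den \<noteq> 0"
    using nz by (simp add: den_def frob_inner inner_diff_left inner_diff_right)
  ultimately show ?thesis using num0 by (simp add: divide_le_eq_1)
qed

section \<open>Simplex geometry\<close>

lemma simplex_vertices_distinct:
  fixes K :: "'n::finite lsimplex"
  assumes "is_simplex K"
  shows "fst K \<notin> range (snd K)" "inj (snd K)"
proof -
  have c: "card (insert (fst K) (range (snd K))) = CARD('n) + 1"
    using assms by (simp add: is_simplex_def verts_def)
  have le: "card (range (snd K)) \<le> CARD('n)" using card_image_le[of UNIV "snd K"] by simp
  show nin: "fst K \<notin> range (snd K)"
  proof
    assume "fst K \<in> range (snd K)"
    then have "insert (fst K) (range (snd K)) = range (snd K)" by auto
    then show False using c le by simp
  qed
  have "card (range (snd K)) = CARD('n)" using c nin by (simp add: card_insert_if)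
  then show "inj (snd K)" using inj_on_iff_eq_card[of UNIV "snd K"] by simp
qed

lemma shull_compact: "compact (shull K)"
  unfolding shull_def verts_def by (intro compact_convex_hull finite_imp_compact) simp

lemma vertices_in_shull: "fst K \<in> shull K" "snd K j \<in> shull K"
  unfolding shull_def verts_def by (auto intro: hull_inc)

lemma matrix_inv_unique:
  fixes A X :: "real^'n::finite^'n"
  assumes AX: "A ** X = mat 1" and XA: "X ** A = mat 1"
  shows "matrix_inv A = X"
proof -
  have "A ** matrix_inv A = mat 1 \<and> matrix_inv A ** A = mat 1"
    unfolding matrix_inv_def by (rule someI[of _ X]) (use AX XA in blast)
  have "matrix_inv A = matrix_inv A ** (A ** X)" using AX by simp
  also have "\<dots> = (matrix_inv A ** A) ** X" by (simp add: matrix_mul_assoc)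
  also have "\<dots> = X" using \<open>_ \<and> _\<close> by simp
  finally show ?thesis .
qed

lemma matrix_inv_transpose:
  fixes A :: "real^'n::finite^'n"
  assumes "matrix_inv A ** A = mat 1" "A ** matrix_inv A = mat 1"
  shows "matrix_inv (transpose A) = transpose (matrix_inv A)"
proof (rule matrix_inv_unique)
  show "transpose A ** transpose (matrix_inv A) = mat 1"
    using assms(1) by (metis matrix_transpose_mul transpose_mat)
  show "transpose (matrix_inv A) ** transpose A = mat 1"
    using assms(2) by (metis matrix_transpose_mul transpose_mat)
qed

text \<open>The edge matrix \<open>B\<^sub>K\<close> of a nondegenerate simplex is invertible: its columns
  \<open>P\<^sub>j - P\<^sub>0\<close> are linearly independent by affine independence of the vertices.\<close>

lemma BK_invertible:
  fixes K :: "'n::finite lsimplex"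
  assumes S: "is_simplex K"
  shows "matrix_inv (BK K) ** BK K = mat 1" "BK K ** matrix_inv (BK K) = mat 1"
proof -
  note distinct = simplex_vertices_distinct[OF S]
  define E where "E j = snd K j - fst K" for j
  have injE: "inj E" using distinct(2) by (auto simp: E_def inj_def)
  have "independent ((+) (- fst K) ` range (snd K))"
    using S affine_dependent_iff_dependent[OF distinct(1)] by (simp add: is_simplex_def verts_def)
  moreover have "(+) (- fst K) ` range (snd K) = range E" by (auto simp: E_def)
  ultimately have indE: "independent (range E)" by simp
  have "\<exists>X. X ** BK K = mat 1"
    unfolding matrix_left_invertible_independent_columns
  proof (rule allI, rule impI)
    fix c :: "'n \<Rightarrow> real"
    assume h: "(\<Sum>i\<in>UNIV. c i *s column i (BK K)) = 0"
    have col: "column i (BK K) = E i" for i by (simp add: column_def BK_def E_def vec_eq_iff)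
    have "(\<Sum>v\<in>range E. c (inv E v) *\<^sub>R v) = (\<Sum>i\<in>UNIV. c (inv E (E i)) *\<^sub>R E i)"
      by (simp add: sum.reindex[OF injE] o_def)
    also have "\<dots> = (\<Sum>i\<in>UNIV. c i *s column i (BK K))"
      by (simp add: injE col scalar_mult_eq_scaleR)
    finally have "(\<Sum>v\<in>range E. c (inv E v) *\<^sub>R v) = (\<Sum>i\<in>UNIV. c i *s column i (BK K))" .
    with h have sum0: "(\<Sum>v\<in>range E. c (inv E v) *\<^sub>R v) = 0" by simp
    have "(\<Sum>v\<in>range E. d v *\<^sub>R v) = 0 \<Longrightarrow> \<forall>v\<in>range E. d v = 0" for d
      using indE unfolding independent_explicit by blast
    from this[OF sum0] have "\<forall>v\<in>range E. c (inv E v) = 0" .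
    then show "\<forall>i. c i = 0" by (simp add: injE)
  qed
  then obtain X where X: "X ** BK K = mat 1" by blast
  then have X2: "BK K ** X = mat 1" by (simp add: matrix_left_right_inverse)
  then show "matrix_inv (BK K) ** BK K = mat 1" "BK K ** matrix_inv (BK K) = mat 1"
    using X matrix_inv_unique[OF X2 X] by auto
qed

lemma barycentric_coordinates:
  fixes K :: "'n::finite lsimplex"
  assumes S: "is_simplex K" and x: "x \<in> shull K"
  shows "\<And>j. (matrix_inv (BK K) *v (x - fst K)) $ j \<ge> 0"
    and "(\<Sum>j\<in>UNIV. (matrix_inv (BK K) *v (x - fst K)) $ j) \<le> 1"
proof -
  note distinct = simplex_vertices_distinct[OF S]
  let ?V = "insert (fst K) (range (snd K))"
  have fin: "finite ?V" by simp
  obtain u where u: "\<forall>v\<in>?V. 0 \<le> u v" "sum u ?V = 1" "(\<Sum>v\<in>?V. u v *\<^sub>R v) = x"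
    using x unfolding shull_def verts_def convex_hull_finite[OF fin] by blast
  have s1: "sum u ?V = u (fst K) + (\<Sum>j\<in>UNIV. u (snd K j))"
    using distinct by (simp add: sum.reindex)
  have s2: "(\<Sum>v\<in>?V. u v *\<^sub>R v) = u (fst K) *\<^sub>R fst K + (\<Sum>j\<in>UNIV. u (snd K j) *\<^sub>R snd K j)"
    using distinct by (simp add: sum.reindex)
  define \<nu> where "\<nu> = (\<chi> j. u (snd K j))"
  have "x - fst K = (\<Sum>j\<in>UNIV. u (snd K j) *\<^sub>R snd K j) - (1 - u (fst K)) *\<^sub>R fst K"
    using u(3) s2 by (simp add: algebra_simps)
  also have "\<dots> = (\<Sum>j\<in>UNIV. u (snd K j) *\<^sub>R (snd K j - fst K))"
    using u(2) s1 by (simp add: scaleR_diff_right sum_subtractf scaleR_sum_left[symmetric])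
  also have "\<dots> = BK K *v \<nu>"
    by (simp add: vec_eq_iff matrix_vector_mult_def BK_def \<nu>_def mult.commute)
  finally have coords: "matrix_inv (BK K) *v (x - fst K) = \<nu>"
    by (simp add: matrix_vector_mul_assoc BK_invertible(1)[OF S])
  show "\<And>j. (matrix_inv (BK K) *v (x - fst K)) $ j \<ge> 0"
    using u(1) by (simp add: coords \<nu>_def)
  show "(\<Sum>j\<in>UNIV. (matrix_inv (BK K) *v (x - fst K)) $ j) \<le> 1"
    using u(1,2) s1 by (simp add: coords \<nu>_def)
qed

text \<open>The radii of balls inside a bounded set are bounded by its diameter, so the inradius
  is a genuine supremum: it is nonnegative and nearly attained.\<close>

lemma inscribed_radii_bdd_above:
  fixes S :: "(real^'n::finite) set"
  assumes "bounded S"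
  shows "bdd_above {r. \<exists>x. ball x r \<subseteq> S}"
proof (rule bdd_aboveI)
  fix r assume "r \<in> {r. \<exists>x. ball x r \<subseteq> S}"
  then obtain x where x: "ball x r \<subseteq> S" by blast
  show "r \<le> diameter S"
  proof (cases "r > 0")
    case True
    then have "diameter (ball x r) \<le> diameter S" using x assms by (intro diameter_subset)
    then show ?thesis using True by simp
  qed (use diameter_ge_0[OF assms] in simp)
qed

lemma inradius_nonneg:
  fixes S :: "(real^'n::finite) set"
  assumes "bounded S"
  shows "0 \<le> inradius S"
  unfolding inradius_def using inscribed_radii_bdd_above[OF assms] by (intro cSup_upper) simp_all

lemma inscribed_half_ball:
  fixes S :: "(real^'n::finite) set"
  assumes "bounded S" "inradius S > 0"
  obtains z where "cball z (inradius S / 2) \<subseteq> S"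
proof -
  have "inradius S / 2 < Sup {r. \<exists>x. ball x r \<subseteq> S}"
    using assms(2) by (simp add: inradius_def)
  moreover have "(0::real) \<in> {r. \<exists>x. ball x r \<subseteq> S}" by simp
  ultimately obtain r where "inradius S / 2 < r" "r \<in> {r. \<exists>x. ball x r \<subseteq> S}"
    using less_cSup_iff[OF _ inscribed_radii_bdd_above[OF assms(1)]] by blast
  then obtain z where r: "inradius S / 2 < r" and z: "ball z r \<subseteq> S" by blast
  have "cball z (inradius S / 2) \<subseteq> ball z r" using r by (simp add: cball_subset_ball_iff)
  with z have "cball z (inradius S / 2) \<subseteq> S" by blast
  then show ?thesis by (rule that)
qed

text \<open>Every barycentric coordinate varies by at most one over \<open>K\<close>; evaluating it at the
  two ends of a diameter of an inscribed ball shows that the entries of \<open>B\<^sub>K\<^sup>-\<^sup>1\<close> are at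
  most the reciprocal of the inradius.\<close>

lemma inradius_times_inverse_entry:
  fixes K :: "'n::finite lsimplex"
  assumes S: "is_simplex K"
  shows "inradius (shull K) * \<bar>matrix_inv (BK K) $ j $ m\<bar> \<le> 1"
proof -
  let ?Bi = "matrix_inv (BK K)" and ?\<rho> = "inradius (shull K)"
  have bd: "bounded (shull K)" using shull_compact compact_imp_bounded by blast
  show ?thesis
  proof (cases "?\<rho> > 0")
    case False
    then show ?thesis using inradius_nonneg[OF bd] by simp
  next
    case True
    obtain z where z: "cball z (?\<rho> / 2) \<subseteq> shull K" using inscribed_half_ball[OF bd True] .
    define e :: "real^'n" where "e = axis m 1"
    define y1 where "y1 = z + (?\<rho> / 2) *\<^sub>R e"
    define y2 where "y2 = z - (?\<rho> / 2) *\<^sub>R e"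
    have "y1 \<in> cball z (?\<rho> / 2)" "y2 \<in> cball z (?\<rho> / 2)"
      using True by (simp_all add: y1_def y2_def dist_norm e_def)
    then have y: "y1 \<in> shull K" "y2 \<in> shull K" using z by auto
    have coord01: "0 \<le> (?Bi *v (y - fst K)) $ j \<and> (?Bi *v (y - fst K)) $ j \<le> 1"
      if "y \<in> shull K" for y
    proof -
      note bc = barycentric_coordinates[OF S that]
      have "(?Bi *v (y - fst K)) $ j \<le> (\<Sum>j\<in>UNIV. (?Bi *v (y - fst K)) $ j)"
        using bc(1) by (intro member_le_sum) auto
      then show ?thesis using bc by auto
    qed
    have "(?Bi *v (y1 - fst K)) $ j - (?Bi *v (y2 - fst K)) $ j = (?Bi *v (y1 - y2)) $ j"
      by (simp add: matrix_vector_mult_diff_distrib)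
    also have "y1 - y2 = ?\<rho> *\<^sub>R e"
      by (simp add: y1_def y2_def scaleR_add_left[symmetric])
    also have "(?Bi *v (?\<rho> *\<^sub>R e)) $ j = ?\<rho> * ?Bi $ j $ m"
      by (simp add: e_def matrix_vector_mult_scaleR matrix_vector_mult_basis column_def)
    finally have "\<bar>?\<rho> * ?Bi $ j $ m\<bar> \<le> 1" using coord01[OF y(1)] coord01[OF y(2)] by linarith
    then show ?thesis using True by (simp add: abs_mult)
  qed
qed

section \<open>Affine matrix fields\<close>

text \<open>On a simplex a field of \<open>S\<^sup>1\<^sub>h\<close> is \<open>x \<mapsto> f x + c\<close> with \<open>f\<close> linear; its squared
  gradient is the constant \<open>gradient_energy f\<close>, which also controls the Lipschitz
  constant of the field.\<close>

definition gradient_energy :: "(real^'m::finite \<Rightarrow> real^'n::finite^'n) \<Rightarrow> real" where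
  "gradient_energy f = (\<Sum>i\<in>UNIV. \<Sum>j\<in>UNIV. \<Sum>k\<in>UNIV. (f (axis k 1) $ i $ j)\<^sup>2)"

lemma gradient_energy_nonneg: "gradient_energy f \<ge> 0"
  unfolding gradient_energy_def by (intro sum_nonneg) simp

lemma linear_entry:
  fixes f :: "real^'m::finite \<Rightarrow> real^'n::finite^'n"
  assumes "linear f" shows "linear (\<lambda>v. f v $ i $ j)"
  using assms unfolding linear_iff by (simp add: linear_add linear_scale)

lemma linear_entry_expansion:
  fixes f :: "real^'m::finite \<Rightarrow> real^'n::finite^'n"
  assumes lf: "linear f"
  shows "f v $ i $ j = v \<bullet> (\<chi> k. f (axis k 1) $ i $ j)"
proof -
  have "f v = f (\<Sum>k\<in>UNIV. v $ k *s axis k 1)" by (simp add: basis_expansion)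
  also have "\<dots> = (\<Sum>k\<in>UNIV. v $ k *\<^sub>R f (axis k 1))"
    by (simp add: linear_sum[OF lf] linear_scale[OF lf] scalar_mult_eq_scaleR)
  finally show ?thesis by (simp add: inner_vec_def sum_component)
qed

lemma linear_field_bound:
  fixes f :: "real^'m::finite \<Rightarrow> real^'n::finite^'n"
  assumes lf: "linear f"
  shows "norm (f v) \<le> norm v * sqrt (gradient_energy f)"
proof -
  define b where "b i j = (\<chi> k. f (axis k 1) $ i $ j)" for i j
  have bb: "b i j \<bullet> b i j = (\<Sum>k\<in>UNIV. (f (axis k 1) $ i $ j)\<^sup>2)" for i j
    by (simp add: b_def inner_vec_def power2_eq_square)
  have "(norm (f v))\<^sup>2 = (\<Sum>i\<in>UNIV. \<Sum>j\<in>UNIV. (f v $ i $ j)\<^sup>2)"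
    by (simp only: power2_norm_eq_inner) (simp add: inner_vec_def inner_real_def power2_eq_square)
  also have "\<dots> = (\<Sum>i\<in>UNIV. \<Sum>j\<in>UNIV. (v \<bullet> b i j)\<^sup>2)"
    by (simp only: linear_entry_expansion[OF lf, of v] b_def)
  also have "\<dots> \<le> (\<Sum>i\<in>UNIV. \<Sum>j\<in>UNIV. (v \<bullet> v) * (b i j \<bullet> b i j))"
    by (intro sum_mono Cauchy_Schwarz_ineq)
  also have "\<dots> = (norm v)\<^sup>2 * gradient_energy f"
    by (simp only: bb gradient_energy_def sum_distrib_left[symmetric] dot_square_norm[of v])
  also have "\<dots> = (norm v * sqrt (gradient_energy f))\<^sup>2"
    by (simp add: power_mult_distrib gradient_energy_nonneg)
  finally show ?thesis by (rule power2_le_imp_le) (simp add: gradient_energy_nonneg)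
qed

lemma grad_sq_affine:
  fixes \<phi> :: "real^'n::finite \<Rightarrow> real^'n^'n"
  assumes lf: "linear f" and aff: "\<forall>x\<in>shull K. \<phi> x = f x + c" and x: "x \<in> interior (shull K)"
  shows "grad_sq K \<phi> x = gradient_energy f"
proof -
  have "frechet_derivative (\<lambda>y. \<phi> y $ i $ j) (at x within shull K) = (\<lambda>v. f v $ i $ j)" for i j
  proof -
    have "((\<lambda>y. f y $ i $ j + c $ i $ j) has_derivative (\<lambda>v. f v $ i $ j)) (at x)"
      by (intro has_derivative_add_const linear_imp_has_derivative linear_entry lf)
    then have "((\<lambda>y. \<phi> y $ i $ j) has_derivative (\<lambda>v. f v $ i $ j)) (at x)"
      by (rule has_derivative_transform_within_open[OF _ open_interior x])
        (use aff interior_subset in fastforce)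
    then show ?thesis unfolding at_within_interior[OF x] by (rule frechet_derivative_at[symmetric])
  qed
  then show ?thesis unfolding grad_sq_def gradient_energy_def by simp
qed

text \<open>The boundary of a simplex is negligible, so the gradient integral of an affine field
  is its gradient energy times the volume.\<close>

lemma integral_grad_sq_affine:
  fixes \<phi> :: "real^'n::finite \<Rightarrow> real^'n^'n"
  assumes lf: "linear f" and aff: "\<forall>x\<in>shull K. \<phi> x = f x + c"
  shows "integral (shull K) (grad_sq K \<phi>) = gradient_energy f * measure lebesgue (shull K)"
proof -
  have cv: "convex (shull K)" by (simp add: shull_def convex_convex_hull)
  have cl: "closed (shull K)" using shull_compact compact_imp_closed by blast
  have "integral (shull K) (grad_sq K \<phi>) = integral (shull K) (\<lambda>x. gradient_energy f * 1)"
  proof (rule integral_spike[OF negligible_convex_frontier[OF cv]])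
    fix x assume "x \<in> shull K - frontier (shull K)"
    then have "x \<in> interior (shull K)" using cl by (simp add: frontier_def closure_closed)
    then show "gradient_energy f * 1 = grad_sq K \<phi> x" using grad_sq_affine[OF lf aff] by simp
  qed
  also have "\<dots> = gradient_energy f * measure lebesgue (shull K)"
    by (simp only: integral_mult_right
        lmeasure_integral[OF lmeasurable_compact[OF shull_compact], symmetric])
  finally show ?thesis .
qed

text \<open>Pointwise Frobenius bounds integrate to volume bounds (the integral of a
  non-integrable function is zero, so integrability need not be checked).\<close>

lemma integral_frob_sq_le:
  fixes F :: "real^'m::finite \<Rightarrow> real^'n::finite^'n"
  assumes S: "S \<in> lmeasurable" and bound: "\<And>x. x \<in> S \<Longrightarrow> norm (F x) \<le> B"
  shows "integral S (\<lambda>x. frob_sq (F x)) \<le> B\<^sup>2 * measure lebesgue S"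
proof (cases "(\<lambda>x. frob_sq (F x)) integrable_on S")
  case True
  have "integral S (\<lambda>x. frob_sq (F x)) \<le> integral S (\<lambda>x. B\<^sup>2 * 1)"
    using bound integrable_on_const[OF S]
    by (intro integral_le[OF True]) (auto simp: frob_sq_norm intro!: power_mono)
  also have "\<dots> = B\<^sup>2 * measure lebesgue S"
    by (simp only: integral_mult_right lmeasure_integral[OF S, symmetric])
  finally show ?thesis .
qed (simp add: not_integrable_integral)

lemma matfun_oscillation_bound:
  fixes \<phi> :: "real^'n::finite \<Rightarrow> real^'n^'n"
  assumes lf: "linear f" and aff: "\<forall>x\<in>shull K. \<phi> x = f x + c"
    and sym: "\<forall>x\<in>shull K. transpose (\<phi> x) = \<phi> x"
    and lip: "\<And>s t. \<bar>\<beta> s - \<beta> t\<bar> \<le> \<bar>s - t\<bar>"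
    and v: "v \<in> shull K" and x: "x \<in> shull K"
  shows "norm (matfun \<beta> (\<phi> v) - matfun \<beta> (\<phi> x)) \<le> diameter (shull K) * sqrt (gradient_energy f)"
proof -
  have "norm (matfun \<beta> (\<phi> v) - matfun \<beta> (\<phi> x)) \<le> norm (\<phi> v - \<phi> x)"
    using sym v x lip by (intro matfun_lipschitz) auto
  also have "\<phi> v - \<phi> x = f (v - x)" using aff v x by (simp add: linear_diff[OF lf])
  also have "norm (f (v - x)) \<le> norm (v - x) * sqrt (gradient_energy f)"
    by (rule linear_field_bound[OF lf])
  also have "\<dots> \<le> diameter (shull K) * sqrt (gradient_energy f)"
    using diameter_bounded_bound[OF compact_imp_bounded[OF shull_compact] v x]
    by (intro mult_right_mono) (simp_all add: dist_norm gradient_energy_nonneg)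
  finally show ?thesis .
qed

section \<open>Pointwise estimates on one simplex\<close>

text \<open>The nodal interpolant is a convex combination of vertex values, so its error at \<open>x\<close>
  is at most the largest deviation of a vertex value from the value at \<open>x\<close>.\<close>

lemma interpolation_error_pointwise:
  fixes K :: "'n::finite lsimplex" and b :: "real^'n \<Rightarrow> real^'n^'n"
  assumes S: "is_simplex K" and x: "x \<in> shull K"
    and b0: "norm (b (fst K) - b x) \<le> M" and bj: "\<And>j. norm (b (snd K j) - b x) \<le> M"
  shows "norm (interpK K b x - b x) \<le> M"
proof -
  define \<mu> where "\<mu> = matrix_inv (BK K) *v (x - fst K)"
  define l0 where "l0 = 1 - (\<Sum>j\<in>UNIV. \<mu> $ j)"
  have \<mu>0: "\<mu> $ j \<ge> 0" for j using barycentric_coordinates(1)[OF S x] by (simp add: \<mu>_def)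
  have l00: "l0 \<ge> 0" using barycentric_coordinates(2)[OF S x] by (simp add: l0_def \<mu>_def)
  have "interpK K b x - b x = l0 *\<^sub>R b (fst K) + (\<Sum>j\<in>UNIV. \<mu> $ j *\<^sub>R b (snd K j))
      - (l0 + (\<Sum>j\<in>UNIV. \<mu> $ j)) *\<^sub>R b x"
    by (simp add: interpK_def Let_def \<mu>_def[symmetric] l0_def)
  also have "\<dots> = l0 *\<^sub>R (b (fst K) - b x) + (\<Sum>j\<in>UNIV. \<mu> $ j *\<^sub>R (b (snd K j) - b x))"
    by (simp add: scaleR_diff_right sum_subtractf scaleR_add_left scaleR_sum_left algebra_simps)
  finally have "norm (interpK K b x - b x)
      = norm (l0 *\<^sub>R (b (fst K) - b x) + (\<Sum>j\<in>UNIV. \<mu> $ j *\<^sub>R (b (snd K j) - b x)))"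
    by simp
  also have "\<dots> \<le> norm (l0 *\<^sub>R (b (fst K) - b x)) + norm (\<Sum>j\<in>UNIV. \<mu> $ j *\<^sub>R (b (snd K j) - b x))"
    by (rule norm_triangle_ineq)
  also have "\<dots> \<le> norm (l0 *\<^sub>R (b (fst K) - b x)) + (\<Sum>j\<in>UNIV. norm (\<mu> $ j *\<^sub>R (b (snd K j) - b x)))"
    by (intro add_left_mono norm_sum)
  also have "\<dots> \<le> l0 * M + (\<Sum>j\<in>UNIV. \<mu> $ j * M)"
    using l00 \<mu>0 b0 bj by (intro add_mono sum_mono) (simp_all add: mult_left_mono)
  also have "\<dots> = (l0 + (\<Sum>j\<in>UNIV. \<mu> $ j)) * M" by (simp add: sum_distrib_right distrib_right)
  also have "\<dots> = M" by (simp add: l0_def)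
  finally show ?thesis .
qed

text \<open>Since its weight lies in \<open>[0,1]\<close>, \<open>Lambda_hat j\<close> is no farther from any matrix \<open>X\<close> than
  the two vertex values \<open>a\<^sub>0, a\<^sub>j\<close> it interpolates.\<close>

lemma Lambda_hat_near:
  fixes K :: "'n::finite lsimplex" and \<phi> :: "real^'n \<Rightarrow> real^'n^'n"
  assumes tr: "(G, \<beta>, H) \<in> admissible_triples"
    and pd0: "sym_posdef (\<phi> (fst K))" and pdj: "sym_posdef (\<phi> (snd K j))"
    and b0: "norm (matfun \<beta> (\<phi> (fst K)) - X) \<le> M"
    and bj: "norm (matfun \<beta> (\<phi> (snd K j)) - X) \<le> M"
  shows "norm (Lambda_hat G \<beta> H K \<phi> j - X) \<le> M"
proof -
  let ?a0 = "matfun \<beta> (\<phi> (fst K))" and ?aj = "matfun \<beta> (\<phi> (snd K j))"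
  let ?g0 = "matfun (deriv G) (\<phi> (fst K))" and ?gj = "matfun (deriv G) (\<phi> (snd K j))"
  show ?thesis
  proof (cases "frob (?aj - ?a0) (?gj - ?g0) \<noteq> 0")
    case True
    define l where "l = (trace (matfun H ?gj) - trace (matfun H ?g0) - frob ?aj (?gj - ?g0))
        / frob (?a0 - ?aj) (?gj - ?g0)"
    have l01: "0 \<le> l" "l \<le> 1"
      using Lambda_weight_unit_interval[OF tr pd0 pdj True] by (simp_all add: l_def)
    have "Lambda_hat G \<beta> H K \<phi> j = (1 - l) *\<^sub>R ?aj + l *\<^sub>R ?a0"
      using True unfolding Lambda_hat_def Let_def l_def by simp
    then have "Lambda_hat G \<beta> H K \<phi> j - X = (1 - l) *\<^sub>R (?aj - X) + l *\<^sub>R (?a0 - X)"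
      by (simp add: algebra_simps)
    also have "norm \<dots> \<le> norm ((1 - l) *\<^sub>R (?aj - X)) + norm (l *\<^sub>R (?a0 - X))"
      by (rule norm_triangle_ineq)
    also have "\<dots> \<le> (1 - l) * M + l * M"
      using l01 b0 bj by (intro add_mono) (simp_all add: mult_left_mono)
    finally show ?thesis by (simp add: algebra_simps)
  next
    case False
    then show ?thesis using bj by (simp add: Lambda_hat_def Let_def)
  qed
qed

lemma shape_regular_inverse_entry:
  fixes K :: "'n::finite lsimplex"
  assumes S: "is_simplex K" and reg: "diameter (shull K) \<le> \<sigma> * inradius (shull K)"
  shows "\<bar>matrix_inv (BK K) $ j $ m\<bar> * diameter (shull K) \<le> \<sigma>"
proof -
  let ?d = "diameter (shull K)" and ?\<rho> = "inradius (shull K)" and ?b = "\<bar>matrix_inv (BK K) $ j $ m\<bar>"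
  have bd: "bounded (shull K)" using shull_compact compact_imp_bounded by blast
  have "0 < dist (fst K) (snd K j)" using simplex_vertices_distinct(1)[OF S] by auto
  also have "\<dots> \<le> ?d" using diameter_bounded_bound[OF bd vertices_in_shull] .
  finally have "0 < \<sigma> * ?\<rho>" using reg by linarith
  then have \<sigma>: "\<sigma> > 0" using inradius_nonneg[OF bd] by (simp add: zero_less_mult_iff)
  have "?b * ?d \<le> ?b * (\<sigma> * ?\<rho>)" using reg by (simp add: mult_left_mono)
  also have "\<dots> = \<sigma> * (?\<rho> * ?b)" by simp
  also have "\<dots> \<le> \<sigma>" using inradius_times_inverse_entry[OF S] \<sigma> by (simp add: mult_left_le)
  finally show ?thesis .
qed

lemma Lambda_coefficient_sum:
  fixes K :: "'n::finite lsimplex"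
  assumes S: "is_simplex K"
  shows "(\<Sum>j\<in>UNIV. matrix_inv (transpose (BK K)) $ m $ j * transpose (BK K) $ j $ p)
    = (if m = p then 1 else 0)"
proof -
  have "matrix_inv (transpose (BK K)) ** transpose (BK K) = mat 1"
    unfolding matrix_inv_transpose[OF BK_invertible[OF S]]
    by (metis BK_invertible(2)[OF S] matrix_transpose_mul transpose_mat)
  then show ?thesis by (simp add: vec_eq_iff mat_def matrix_matrix_mult_def)
qed

lemma Lambda_coefficient_bound:
  fixes K :: "'n::finite lsimplex"
  assumes S: "is_simplex K" and reg: "diameter (shull K) \<le> \<sigma> * inradius (shull K)"
  shows "\<bar>matrix_inv (transpose (BK K)) $ m $ j * transpose (BK K) $ j $ p\<bar> \<le> \<sigma>"
proof -
  let ?Bi = "matrix_inv (BK K)"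
  have bd: "bounded (shull K)" using shull_compact compact_imp_bounded by blast
  have "\<bar>BK K $ p $ j\<bar> \<le> norm (snd K j - fst K)"
    using component_le_norm_cart[of "snd K j - fst K" p] by (simp add: BK_def)
  also have "\<dots> \<le> diameter (shull K)"
    using diameter_bounded_bound[OF bd vertices_in_shull(2,1)] by (simp add: dist_norm)
  finally have "\<bar>?Bi $ j $ m\<bar> * \<bar>BK K $ p $ j\<bar> \<le> \<bar>?Bi $ j $ m\<bar> * diameter (shull K)"
    by (simp add: mult_left_mono)
  also have "\<dots> \<le> \<sigma>" by (rule shape_regular_inverse_entry[OF S reg])
  finally show ?thesis
    by (simp only: matrix_inv_transpose[OF BK_invertible[OF S]]) (simp add: transpose_def abs_mult)
qed

text \<open>Hence \<open>\<Lambda>\<^sub>m\<^sub>p - \<delta>\<^sub>m\<^sub>p X = \<Sum>\<^sub>j c\<^sub>j (Lambda_hat j - X)\<close> is small when every \<open>Lambda_hat j\<close> is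
  close to \<open>X\<close>.\<close>

lemma Lambda_error_pointwise:
  fixes K :: "'n::finite lsimplex"
  assumes S: "is_simplex K" and reg: "diameter (shull K) \<le> \<sigma> * inradius (shull K)"
    and near: "\<And>j. norm (Lambda_hat G \<beta> H K \<phi> j - X) \<le> M"
  shows "norm (Lambda G \<beta> H K \<phi> m p - (if m = p then 1 else 0) *\<^sub>R X) \<le> real CARD('n) * \<sigma> * M"
proof -
  define c where "c j = matrix_inv (transpose (BK K)) $ m $ j * transpose (BK K) $ j $ p" for j
  have "Lambda G \<beta> H K \<phi> m p - (if m = p then 1 else 0) *\<^sub>R X
      = (\<Sum>j\<in>UNIV. c j *\<^sub>R Lambda_hat G \<beta> H K \<phi> j) - (\<Sum>j\<in>UNIV. c j) *\<^sub>R X"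
    using Lambda_coefficient_sum[OF S, of m p] by (simp add: Lambda_def c_def)
  also have "\<dots> = (\<Sum>j\<in>UNIV. c j *\<^sub>R (Lambda_hat G \<beta> H K \<phi> j - X))"
    by (simp add: scaleR_diff_right sum_subtractf scaleR_sum_left)
  finally have "norm (Lambda G \<beta> H K \<phi> m p - (if m = p then 1 else 0) *\<^sub>R X)
      \<le> (\<Sum>j\<in>UNIV. norm (c j *\<^sub>R (Lambda_hat G \<beta> H K \<phi> j - X)))"
    by (simp only: norm_sum)
  also have "\<dots> \<le> (\<Sum>j\<in>(UNIV::'n set). \<sigma> * M)"
  proof (rule sum_mono)
    fix j
    have "\<bar>c j\<bar> \<le> \<sigma>" unfolding c_def by (rule Lambda_coefficient_bound[OF S reg])
    moreover have "0 \<le> \<sigma>" using abs_ge_zero calculation by (rule order_trans)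
    ultimately show "norm (c j *\<^sub>R (Lambda_hat G \<beta> H K \<phi> j - X)) \<le> \<sigma> * M"
      using near[of j] by (simp add: mult_mono)
  qed
  finally show ?thesis by simp
qed

lemma S1hPD_on_element:
  assumes part: "conforming_partition D T" and KT: "K \<in> T" and \<phi>: "\<phi> \<in> S1hPD D T"
  obtains f c where "is_simplex K" "diameter (shull K) \<le> meshsize T"
    "linear f" "\<forall>x\<in>shull K. \<phi> x = f x + c" "\<forall>x\<in>shull K. transpose (\<phi> x) = \<phi> x"
    "\<forall>P\<in>verts K. sym_posdef (\<phi> P)"
proof -
  have "\<exists>f c. linear f \<and> (\<forall>x\<in>shull K. \<phi> x = f x + c)"
    using \<phi> KT by (simp add: S1hPD_def S1h_def)
  then obtain f c where "linear f" "\<forall>x\<in>shull K. \<phi> x = f x + c" by blast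
  moreover have "is_simplex K" using part KT by (simp add: conforming_partition_def)
  moreover have "diameter (shull K) \<le> meshsize T"
    using part KT unfolding meshsize_def conforming_partition_def by (intro Max_ge) auto
  moreover have "\<forall>x\<in>shull K. transpose (\<phi> x) = \<phi> x"
    using part KT \<phi> by (auto simp: conforming_partition_def S1hPD_def S1h_def)
  moreover have "\<forall>P\<in>verts K. sym_posdef (\<phi> P)" using KT \<phi> by (simp add: S1hPD_def)
  ultimately show ?thesis using that by blast
qed

text \<open>With \<open>M = h |\<nabla>\<phi>|\<close> every value of \<open>\<beta>(\<phi>)\<close> on \<open>K\<close> is within \<open>M\<close> of every other;
  both error terms are then bounded pointwise by multiples of \<open>M\<close>, and
  \<open>\<integral>\<^sub>K |\<nabla>\<phi>|\<^sup>2 = |\<nabla>\<phi>|\<^sup>2 |K|\<close> closes the estimate.\<close>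

lemma element_estimate:
  fixes D :: "(real^'n::finite) set" and \<phi> :: "real^'n \<Rightarrow> real^'n^'n"
  assumes part: "conforming_partition D T" and KT: "K \<in> T" and \<phi>: "\<phi> \<in> S1hPD D T"
    and reg: "diameter (shull K) \<le> \<sigma> * inradius (shull K)"
    and tr: "(G, \<beta>, H) \<in> admissible_triples"
  shows "integral (shull K) (\<lambda>x. frob_sq (interpK K (\<lambda>y. matfun \<beta> (\<phi> y)) x - matfun \<beta> (\<phi> x)))
        + Max ((\<lambda>(m, p). integral (shull K)
              (\<lambda>x. frob_sq (Lambda G \<beta> H K \<phi> m p - (if m = p then 1 else 0) *\<^sub>R matfun \<beta> (\<phi> x))))
            ` UNIV)
        \<le> (1 + (real CARD('n) * \<sigma>)\<^sup>2) * (meshsize T)\<^sup>2 * integral (shull K) (grad_sq K \<phi>)"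
proof -
  obtain f c where S: "is_simplex K" and h: "diameter (shull K) \<le> meshsize T"
    and lf: "linear f" and aff: "\<forall>x\<in>shull K. \<phi> x = f x + c"
    and sym: "\<forall>x\<in>shull K. transpose (\<phi> x) = \<phi> x" and pd: "\<forall>P\<in>verts K. sym_posdef (\<phi> P)"
    using S1hPD_on_element[OF part KT \<phi>] .
  define M where "M = meshsize T * sqrt (gradient_energy f)"
  define vol where "vol = measure lebesgue (shull K)"
  have meas: "shull K \<in> lmeasurable" by (rule lmeasurable_compact[OF shull_compact])
  have pd_verts: "sym_posdef (\<phi> (fst K))" "\<And>j. sym_posdef (\<phi> (snd K j))"
    using pd by (auto simp: verts_def)
  have "diameter (shull K) * sqrt (gradient_energy f) \<le> M"
    unfolding M_def using h by (intro mult_right_mono) (simp_all add: gradient_energy_nonneg)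
  then have osc: "norm (matfun \<beta> (\<phi> v) - matfun \<beta> (\<phi> x)) \<le> M"
    if "v \<in> shull K" "x \<in> shull K" for v x
    using matfun_oscillation_bound[OF lf aff sym admissible_triple_props(2)[OF tr] that] by linarith
  have interp: "integral (shull K) (\<lambda>x. frob_sq (interpK K (\<lambda>y. matfun \<beta> (\<phi> y)) x - matfun \<beta> (\<phi> x)))
      \<le> M\<^sup>2 * vol"
    unfolding vol_def
    by (intro integral_frob_sq_le[OF meas] interpolation_error_pointwise[OF S] osc vertices_in_shull)
  have Lambda: "Max ((\<lambda>(m, p). integral (shull K)
              (\<lambda>x. frob_sq (Lambda G \<beta> H K \<phi> m p - (if m = p then 1 else 0) *\<^sub>R matfun \<beta> (\<phi> x))))
            ` UNIV) \<le> (real CARD('n) * \<sigma> * M)\<^sup>2 * vol"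
    unfolding vol_def
    by (intro Max.boundedI) (auto intro!: integral_frob_sq_le[OF meas] Lambda_error_pointwise[OF S reg]
        Lambda_hat_near[OF tr pd_verts] osc vertices_in_shull)
  have "integral (shull K) (grad_sq K \<phi>) = gradient_energy f * vol"
    unfolding vol_def by (rule integral_grad_sq_affine[OF lf aff])
  moreover have "M\<^sup>2 = (meshsize T)\<^sup>2 * gradient_energy f"
    by (simp add: M_def power_mult_distrib gradient_energy_nonneg)
  ultimately show ?thesis
    using add_mono[OF interp Lambda] by (simp add: power_mult_distrib algebra_simps)
qed

theorem lemma5p3:
  fixes \<sigma> :: real
  assumes dim: "CARD('n::finite) = 2 \<or> CARD('n) = 3"
  shows "\<exists>C::real. \<forall>(D::(real^'n) set) T h.
     conforming_partition D T \<and> h = meshsize T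
     \<and> (\<forall>K\<in>T. diameter (shull K) \<le> \<sigma> * inradius (shull K)) \<longrightarrow>
     (\<forall>K\<in>T. \<forall>\<phi>\<in>S1hPD D T. \<forall>(G, \<beta>, H)\<in>admissible_triples.
        integral (shull K) (\<lambda>x. frob_sq (interpK K (\<lambda>y. matfun \<beta> (\<phi> y)) x - matfun \<beta> (\<phi> x)))
        + Max ((\<lambda>(m, p). integral (shull K)
              (\<lambda>x. frob_sq (Lambda G \<beta> H K \<phi> m p - (if m = p then 1 else 0) *\<^sub>R matfun \<beta> (\<phi> x))))
            ` UNIV)
        \<le> C * h\<^sup>2 * integral (shull K) (grad_sq K \<phi>))"
  by (intro exI[of _ "1 + (real CARD('n) * \<sigma>)\<^sup>2"] allI impI ballI)
    (auto intro: element_estimate)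

end
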